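(* Consider the two-user two-hop MAC with AF relays under individual power constraints as in the context, and let $\mathcal R_{opt}$ be its optimal AF rate region. (a) If the upper-layer noise dominates, i.e. $W(\mathbf B^{(2)})\ge W(\mathbf B^{(1i)})\ge1$ for $i=0,1,2$, then the region $\mathcal Q=\mathrm{cl}\,\mathrm{conv}\big(\mathcal R(\mathbf B^{(10)})\cup\mathcal R(\mathbf B^{(11)})\cup\mathcal R(\mathbf B^{(12)})\big)$ satisfies $\max_{\mathcal Q}R_1\ge\max_{\mathcal R_{opt}}R_1-\frac12$, $\max_{\mathcal Q}R_2\ge\max_{\mathcal R_{opt}}R_2-\frac12$ and $\max_{\mathcal Q}(R_1+R_2)\ge\max_{\mathcal R_{opt}}(R_1+R_2)-\frac12$. (b) If the lower-layer noise dominates, i.e. $1\ge W(\mathbf B^{(2)})\ge W(\mathbf B^{(1i)})$ for $i=0,1,2$, then the same three inequalities hold with $\mathcal Q=\mathcal R(\mathbf B^{(2)})$.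
   Context: Two sources $S_1,S_2$ with Gaussian inputs of powers $P_{S_1},P_{S_2}>0$, $n$ relays, one destination. Relay $k$ receives $y_k=h_{S_1,k}x_{S_1}+h_{S_2,k}x_{S_2}+z_k$ and sends $\beta_ky_k$; the destination receives $y_D=\mathbf h_1^T\mathbf B\mathbf h_{01}x_{S_1}+\mathbf h_1^T\mathbf B\mathbf h_{02}x_{S_2}+\mathbf h_1^T\mathbf B\mathbf z_1+z_D$, with $\mathbf h_{0i}=(h_{S_i,k})_k$, $\mathbf h_1=(h_{k,D})_k$ positive, $\mathbf B=\mathrm{diag}(\beta_k)$ real, noises i.i.d. $\mathcal N(0,1)$. $\mathbf B$ is feasible if $|\beta_k|\le\beta_k^{Up}:=\sqrt{P_k^{Up}/(1+h_{S_1,k}^2P_{S_1}+h_{S_2,k}^2P_{S_2})}$. Let $\mathcal C(x)=\frac12\log_2(1+x)$, $\mathbf A=P_{S_1}\mathbf h_{01}\mathbf h_{01}^T+P_{S_2}\mathbf h_{02}\mathbf h_{02}^T$, $W(\mathbf B)=\mathbf h_1^T\mathbf B^2\mathbf h_1$. $\mathcal R(\mathbf B)$ is the set of $(R_1,R_2)\ge0$ with $R_1\le\mathcal C\big((\mathbf h_1^T\mathbf B\mathbf h_{01})^2P_{S_1}/(W(\mathbf B)+1)\big)$, $R_2\le\mathcal C\big((\mathbf h_1^T\mathbf B\mathbf h_{02})^2P_{S_2}/(W(\mathbf B)+1)\big)$, $R_1+R_2\le\mathcal C\big(\mathbf h_1^T\mathbf B\mathbf A\mathbf B\mathbf h_1/(W(\mathbf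 B)+1)\big)$; $\mathcal R_{opt}$ is the closure of the convex hull of $\bigcup_{\mathbf B\text{ feasible}}\mathcal R(\mathbf B)$ (time sharing). Let $P_i=\|\mathbf h_{0i}\|^2P_{S_i}$; fix orthonormal $\mathbf u_1,\mathbf u_2$ and $0\le\alpha\le\beta\le\pi/2$ with $\mathbf h_{0i}/\|\mathbf h_{0i}\|$ equal to $\cos\alpha\,\mathbf u_1+\sin\alpha\,\mathbf u_2$ and $\cos\beta\,\mathbf u_1+\sin\beta\,\mathbf u_2$ respectively; let $\phi(\theta)=P_1\cos^2(\theta-\alpha)+P_2\cos^2(\theta-\beta)$ and $\theta_s$ a maximizer of $\phi$ on $[\alpha,\beta]$. For $\theta$, let $\mathbf x_\theta=\cos\theta\,\mathbf u_1+\sin\theta\,\mathbf u_2$ and $\mathbf B_\theta=\mathrm{diag}(c\,x_{\theta,k}/h_{k,D})$ with $c=\min_{k:x_{\theta,k}\ne0}\beta_k^{Up}h_{k,D}/|x_{\theta,k}|$ (feasible, at least one gain at its bound). Set $\mathbf B^{(10)}=\mathbf B_{\theta_s}$, $\mathbf B^{(11)}=\mathbf B_\alpha$, $\mathbf B^{(12)}=\mathbf B_\beta$, and $\mathbf B^{(2)}=\mathrm{diag}(\beta_1^{Up},\dots,\beta_n^{Up})$. *)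

theory Defs
  imports "HOL-Analysis.Analysis"
begin

text \<open>Relay network with relays indexed by a finite type 'n.
  Channel vectors h01, h02 (sources to relays), h1 (relays to destination).
  A diagonal AF matrix B = diag(beta_k) is represented by the vector b.\<close>

definition Ccap :: "real \<Rightarrow> real" where
  "Ccap x = 1/2 * log 2 (1 + x)"

definition betaUp :: "real \<Rightarrow> real \<Rightarrow> real^'n \<Rightarrow> real^'n \<Rightarrow> real^'n \<Rightarrow> 'n \<Rightarrow> real" where
  "betaUp PS1 PS2 h01 h02 PUp k =
     sqrt (PUp$k / (1 + (h01$k)^2 * PS1 + (h02$k)^2 * PS2))"

definition feasible :: "real \<Rightarrow> real \<Rightarrow> real^'n \<Rightarrow> real^'n \<Rightarrow> real^'n \<Rightarrow> real^'n \<Rightarrow> bool" where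
  "feasible PS1 PS2 h01 h02 PUp b \<longleftrightarrow> (\<forall>k. \<bar>b$k\<bar> \<le> betaUp PS1 PS2 h01 h02 PUp k)"

definition bil :: "real^'n \<Rightarrow> real^'n \<Rightarrow> real^'n \<Rightarrow> real" where
  "bil h b g = (\<Sum>k\<in>UNIV. h$k * b$k * g$k)"

definition Wn :: "real^'n \<Rightarrow> real^'n \<Rightarrow> real" where
  "Wn h1 b = (\<Sum>k\<in>UNIV. (h1$k)^2 * (b$k)^2)"

text \<open>h1^T B A B h1 with A = PS1 h01 h01^T + PS2 h02 h02^T\<close>
definition quadA :: "real \<Rightarrow> real \<Rightarrow> real^'n \<Rightarrow> real^'n \<Rightarrow> real^'n \<Rightarrow> real^'n \<Rightarrow> real" where
  "quadA PS1 PS2 h01 h02 h1 b =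
     (\<Sum>i\<in>UNIV. \<Sum>j\<in>UNIV. h1$i * b$i *
        (PS1 * h01$i * h01$j + PS2 * h02$i * h02$j) * b$j * h1$j)"

definition rateRegion :: "real \<Rightarrow> real \<Rightarrow> real^'n \<Rightarrow> real^'n \<Rightarrow> real^'n \<Rightarrow> real^'n \<Rightarrow> (real \<times> real) set" where
  "rateRegion PS1 PS2 h01 h02 h1 b =
     {(R1, R2). 0 \<le> R1 \<and> 0 \<le> R2 \<and>
        R1 \<le> Ccap ((bil h1 b h01)^2 * PS1 / (Wn h1 b + 1)) \<and>
        R2 \<le> Ccap ((bil h1 b h02)^2 * PS2 / (Wn h1 b + 1)) \<and>
        R1 + R2 \<le> Ccap (quadA PS1 PS2 h01 h02 h1 b / (Wn h1 b + 1))}"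

definition Ropt :: "real \<Rightarrow> real \<Rightarrow> real^'n \<Rightarrow> real^'n \<Rightarrow> real^'n \<Rightarrow> real^'n \<Rightarrow> (real \<times> real) set" where
  "Ropt PS1 PS2 h01 h02 h1 PUp =
     closure (convex hull
       (\<Union>b\<in>{b. feasible PS1 PS2 h01 h02 PUp b}. rateRegion PS1 PS2 h01 h02 h1 b))"

definition xth :: "real^'n \<Rightarrow> real^'n \<Rightarrow> real \<Rightarrow> real^'n" where
  "xth u1 u2 \<theta> = cos \<theta> *\<^sub>R u1 + sin \<theta> *\<^sub>R u2"

definition Bth :: "real \<Rightarrow> real \<Rightarrow> real^'n \<Rightarrow> real^'n \<Rightarrow> real^'n \<Rightarrow> real^'n
                   \<Rightarrow> real^'n \<Rightarrow> real^'n \<Rightarrow> real \<Rightarrow> real^'n" where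
  "Bth PS1 PS2 h01 h02 h1 PUp u1 u2 \<theta> =
     (let x = xth u1 u2 \<theta>;
          c = Min {betaUp PS1 PS2 h01 h02 PUp k * h1$k / \<bar>x$k\<bar> | k. x$k \<noteq> 0}
      in (\<chi> k. c * x$k / h1$k))"

definition B2 :: "real \<Rightarrow> real \<Rightarrow> real^'n \<Rightarrow> real^'n \<Rightarrow> real^'n \<Rightarrow> real^'n" where
  "B2 PS1 PS2 h01 h02 PUp = (\<chi> k. betaUp PS1 PS2 h01 h02 PUp k)"

end

theory Submission
  imports Defs
begin

(* Write v = h1^T B for the relay gains B. Source i then arrives with power PS_i (v . h0i)^2 against
   noise |v|^2 + 1 = W(B) + 1, so each bound of R(B) is C of a quadratic form in v divided by
   W(B) + 1. If W >= 1 at the beamformers, these quotients are at most P1, P2 and phi(theta_s) for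
   every B, because phi(theta_s) is the largest eigenvalue of PS1 h01 h01^T + PS2 h02 h02^T (its
   maximum over all angles is attained on [alpha, beta]); B^(11), B^(12), B^(10) beam along h01, h02
   and the top eigenvector and reach at least half of these values. If W(B^(2)) <= 1, every feasible
   B has |v . h0i| <= v_(B^(2)) . h0i, and B^(2) loses at most a factor 2 in the denominator.
   Halving an SNR costs at most half a bit, and upper bounds by linear functionals of the rates pass
   to the closed convex hull R_opt. *)

section \<open>Maximising a weighted sum of squared cosines\<close>

lemma polar_coordinates:
  fixes a b :: real
  obtains t where "a = sqrt (a\<^sup>2 + b\<^sup>2) * cos t" "b = sqrt (a\<^sup>2 + b\<^sup>2) * sin t"
    "0 \<le> t" "t \<le> pi \<longleftrightarrow> 0 \<le> b"
proof
  let ?z = "Complex a b"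
  show "a = sqrt (a\<^sup>2 + b\<^sup>2) * cos (Arg2pi ?z)" "b = sqrt (a\<^sup>2 + b\<^sup>2) * sin (Arg2pi ?z)"
    using cos_Arg2pi[of ?z] sin_Arg2pi[of ?z] by (simp_all add: complex_norm)
  show "0 \<le> Arg2pi ?z" "Arg2pi ?z \<le> pi \<longleftrightarrow> 0 \<le> b"
    by (simp_all add: Arg2pi_ge_0 Arg2pi_le_pi)
qed

lemma sin_nonneg_imp_nonneg:
  fixes x :: real
  assumes "- pi < x" "x \<le> pi" "0 \<le> sin x"
  shows "0 \<le> x"
proof (rule ccontr)
  assume "\<not> 0 \<le> x"
  then have "0 < sin (- x)" using assms(1) by (intro sin_gt_zero) auto
  then show False using assms(3) by simp
qed

(* (A, B) is a nonnegative combination of the unit vectors at angles 2 alpha and 2 beta, which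
   differ by at most pi; the signs of its cross products with them place its angle between the two. *)
lemma cone_combination_angle_between:
  fixes P1 P2 \<alpha> \<beta> :: real
  defines "A \<equiv> P1 * cos (2 * \<alpha>) + P2 * cos (2 * \<beta>)" and "B \<equiv> P1 * sin (2 * \<alpha>) + P2 * sin (2 * \<beta>)"
  defines "r \<equiv> sqrt (A\<^sup>2 + B\<^sup>2)"
  assumes P: "0 \<le> P1" "0 \<le> P2" and ab: "0 \<le> \<alpha>" "\<alpha> < \<beta>" "\<beta> \<le> pi / 2" and "0 < r"
  obtains \<gamma> where "2 * \<alpha> \<le> \<gamma>" "\<gamma> \<le> 2 * \<beta>" "A = r * cos \<gamma>" "B = r * sin \<gamma>"
proof -
  have "0 \<le> B"
    unfolding B_def using P ab by (intro add_nonneg_nonneg mult_nonneg_nonneg sin_ge_zero) auto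
  then obtain \<gamma> where A: "A = r * cos \<gamma>" and B: "B = r * sin \<gamma>" and "0 \<le> \<gamma>" "\<gamma> \<le> pi"
    using polar_coordinates[of A B] unfolding r_def by metis
  have "0 \<le> sin (2 * \<beta> - 2 * \<alpha>)" using ab by (intro sin_ge_zero) auto
  have "r * sin (\<gamma> - 2 * \<alpha>) = B * cos (2 * \<alpha>) - A * sin (2 * \<alpha>)"
    unfolding A B sin_diff by (simp add: algebra_simps)
  also have "\<dots> = P2 * sin (2 * \<beta> - 2 * \<alpha>)"
    unfolding A_def B_def sin_diff by (simp add: algebra_simps)
  finally have "0 \<le> r * sin (\<gamma> - 2 * \<alpha>)"
    using \<open>0 \<le> sin (2 * \<beta> - 2 * \<alpha>)\<close> P by simp
  then have "0 \<le> sin (\<gamma> - 2 * \<alpha>)" using \<open>0 < r\<close> by (simp add: zero_le_mult_iff)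
  then have "2 * \<alpha> \<le> \<gamma>"
    using sin_nonneg_imp_nonneg[of "\<gamma> - 2 * \<alpha>"] \<open>0 \<le> \<gamma>\<close> \<open>\<gamma> \<le> pi\<close> ab by linarith
  have "r * sin (2 * \<beta> - \<gamma>) = A * sin (2 * \<beta>) - B * cos (2 * \<beta>)"
    unfolding A B sin_diff by (simp add: algebra_simps)
  also have "\<dots> = P1 * sin (2 * \<beta> - 2 * \<alpha>)"
    unfolding A_def B_def sin_diff by (simp add: algebra_simps)
  finally have "0 \<le> r * sin (2 * \<beta> - \<gamma>)"
    using \<open>0 \<le> sin (2 * \<beta> - 2 * \<alpha>)\<close> P by simp
  then have "0 \<le> sin (2 * \<beta> - \<gamma>)" using \<open>0 < r\<close> by (simp add: zero_le_mult_iff)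
  then have "\<gamma> \<le> 2 * \<beta>"
    using sin_nonneg_imp_nonneg[of "2 * \<beta> - \<gamma>"] \<open>\<gamma> \<le> pi\<close> ab by linarith
  show ?thesis using that \<open>2 * \<alpha> \<le> \<gamma>\<close> \<open>\<gamma> \<le> 2 * \<beta>\<close> A B by blast
qed

lemma cos_sin_combination_max_attained_between:
  fixes P1 P2 \<alpha> \<beta> :: real
  defines "A \<equiv> P1 * cos (2 * \<alpha>) + P2 * cos (2 * \<beta>)" and "B \<equiv> P1 * sin (2 * \<alpha>) + P2 * sin (2 * \<beta>)"
  assumes P: "0 \<le> P1" "0 \<le> P2" and ab: "0 \<le> \<alpha>" "\<alpha> \<le> \<beta>" "\<beta> \<le> pi / 2"
  obtains \<theta>0 where "\<alpha> \<le> \<theta>0" "\<theta>0 \<le> \<beta>" "A * cos (2 * \<theta>0) + B * sin (2 * \<theta>0) = sqrt (A\<^sup>2 + B\<^sup>2)"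
proof -
  consider "\<alpha> = \<beta>" | "A = 0" "B = 0" | "\<alpha> < \<beta>" "0 < sqrt (A\<^sup>2 + B\<^sup>2)"
    using ab by (cases "\<alpha> = \<beta>"; cases "A = 0 \<and> B = 0") (auto simp: sum_power2_gt_zero_iff)
  then show ?thesis
  proof cases
    case 1
    then have A: "A = (P1 + P2) * cos (2 * \<alpha>)" and B: "B = (P1 + P2) * sin (2 * \<alpha>)"
      by (simp_all add: A_def B_def algebra_simps)
    have "A * cos (2 * \<alpha>) + B * sin (2 * \<alpha>) = (P1 + P2) * ((cos (2 * \<alpha>))\<^sup>2 + (sin (2 * \<alpha>))\<^sup>2)"
      "A\<^sup>2 + B\<^sup>2 = (P1 + P2)\<^sup>2 * ((cos (2 * \<alpha>))\<^sup>2 + (sin (2 * \<alpha>))\<^sup>2)"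
      unfolding A B by algebra+
    then show ?thesis using that[of \<alpha>] P ab 1 by simp
  next
    case 2
    then show ?thesis using that[of \<alpha>] ab by simp
  next
    case 3
    define r where "r = sqrt (A\<^sup>2 + B\<^sup>2)"
    obtain \<gamma> where \<gamma>: "2 * \<alpha> \<le> \<gamma>" "\<gamma> \<le> 2 * \<beta>" and A: "A = r * cos \<gamma>" and B: "B = r * sin \<gamma>"
      using cone_combination_angle_between[OF P ab(1) _ ab(3)] 3 unfolding A_def B_def r_def by metis
    have "A * cos \<gamma> + B * sin \<gamma> = r * ((cos \<gamma>)\<^sup>2 + (sin \<gamma>)\<^sup>2)"
      unfolding A B by algebra
    then show ?thesis using that[of "\<gamma> / 2"] \<gamma> by (simp add: r_def)
  qed
qed

lemma cos_sq_combination_max_between_is_global: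
  fixes P1 P2 \<alpha> \<beta> :: real
  defines "\<phi> \<equiv> \<lambda>\<theta>. P1 * (cos (\<theta> - \<alpha>))\<^sup>2 + P2 * (cos (\<theta> - \<beta>))\<^sup>2"
  assumes P: "0 \<le> P1" "0 \<le> P2" and ab: "0 \<le> \<alpha>" "\<alpha> \<le> \<beta>" "\<beta> \<le> pi / 2"
    and \<theta>s_max: "\<forall>\<theta>\<in>{\<alpha>..\<beta>}. \<phi> \<theta> \<le> \<phi> \<theta>s"
  shows "\<phi> \<theta> \<le> \<phi> \<theta>s"
proof -
  define A where "A = P1 * cos (2 * \<alpha>) + P2 * cos (2 * \<beta>)"
  define B where "B = P1 * sin (2 * \<alpha>) + P2 * sin (2 * \<beta>)"
  have cos_sq: "(cos x)\<^sup>2 = (1 + cos (2 * x)) / 2" for x :: real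
    by (simp add: cos_double_cos)
  have \<phi>_eq: "\<phi> t = (P1 + P2) / 2 + (A * cos (2 * t) + B * sin (2 * t)) / 2" for t
    unfolding \<phi>_def cos_sq by (simp add: A_def B_def right_diff_distrib cos_diff field_simps)
  obtain \<theta>0 where "\<alpha> \<le> \<theta>0" "\<theta>0 \<le> \<beta>" and \<theta>0: "A * cos (2 * \<theta>0) + B * sin (2 * \<theta>0) = sqrt (A\<^sup>2 + B\<^sup>2)"
    using cos_sin_combination_max_attained_between[OF P ab] unfolding A_def B_def by metis
  have "A * cos (2 * \<theta>) + B * sin (2 * \<theta>) \<le> sqrt (A\<^sup>2 + B\<^sup>2)"
    using norm_cauchy_schwarz[of "(A, B)" "(cos (2 * \<theta>), sin (2 * \<theta>))"] by (simp add: norm_Pair)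
  then have "\<phi> \<theta> \<le> \<phi> \<theta>0" unfolding \<phi>_eq \<theta>0 by simp
  also have "\<dots> \<le> \<phi> \<theta>s" using \<theta>s_max \<open>\<alpha> \<le> \<theta>0\<close> \<open>\<theta>0 \<le> \<beta>\<close> by simp
  finally show ?thesis .
qed

lemma orthonormal_Bessel:
  fixes v u1 u2 :: "'a::real_inner"
  assumes "u1 \<bullet> u1 = 1" "u2 \<bullet> u2 = 1" "u1 \<bullet> u2 = 0"
  shows "(v \<bullet> u1)\<^sup>2 + (v \<bullet> u2)\<^sup>2 \<le> v \<bullet> v"
proof -
  let ?w = "v - (v \<bullet> u1) *\<^sub>R u1 - (v \<bullet> u2) *\<^sub>R u2"
  have "?w \<bullet> ?w = v \<bullet> v - (v \<bullet> u1)\<^sup>2 - (v \<bullet> u2)\<^sup>2"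
    using assms
    by (simp add: inner_diff_left inner_diff_right inner_commute power2_eq_square algebra_simps)
  then show ?thesis using inner_ge_zero[of ?w] by linarith
qed

lemma orthonormal_polar:
  fixes v u1 u2 :: "'a::real_inner"
  assumes "u1 \<bullet> u1 = 1" "u2 \<bullet> u2 = 1" "u1 \<bullet> u2 = 0"
  obtains \<rho> t where "\<rho>\<^sup>2 \<le> v \<bullet> v" "\<And>\<theta>. v \<bullet> (cos \<theta> *\<^sub>R u1 + sin \<theta> *\<^sub>R u2) = \<rho> * cos (t - \<theta>)"
proof -
  define \<rho> where "\<rho> = sqrt ((v \<bullet> u1)\<^sup>2 + (v \<bullet> u2)\<^sup>2)"
  obtain t where "v \<bullet> u1 = \<rho> * cos t" "v \<bullet> u2 = \<rho> * sin t"
    using polar_coordinates[of "v \<bullet> u1" "v \<bullet> u2"] unfolding \<rho>_def by metis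
  then have "v \<bullet> (cos \<theta> *\<^sub>R u1 + sin \<theta> *\<^sub>R u2) = \<rho> * cos (t - \<theta>)" for \<theta>
    by (simp add: inner_add_right cos_diff algebra_simps)
  moreover have "\<rho>\<^sup>2 \<le> v \<bullet> v" using orthonormal_Bessel[OF assms] by (simp add: \<rho>_def)
  ultimately show ?thesis using that by blast
qed

lemma cos_sin_combination_inner:
  fixes u1 u2 :: "'a::real_inner"
  assumes "u1 \<bullet> u1 = 1" "u2 \<bullet> u2 = 1" "u1 \<bullet> u2 = 0"
  shows "(cos s *\<^sub>R u1 + sin s *\<^sub>R u2) \<bullet> (cos t *\<^sub>R u1 + sin t *\<^sub>R u2) = cos (s - t)"
  using assms by (simp add: inner_add_left inner_add_right inner_commute cos_diff)

(* phi theta_s is the largest eigenvalue of the form PS1 g1 g1^T + PS2 g2 g2^T. *)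
lemma rank_two_quadratic_form_le:
  fixes v g1 g2 u1 u2 :: "'a::real_inner" and PS1 PS2 \<alpha> \<beta> \<theta>s :: real
  defines "P1 \<equiv> (norm g1)\<^sup>2 * PS1" and "P2 \<equiv> (norm g2)\<^sup>2 * PS2"
  defines "\<phi> \<equiv> \<lambda>\<theta>. P1 * (cos (\<theta> - \<alpha>))\<^sup>2 + P2 * (cos (\<theta> - \<beta>))\<^sup>2"
  assumes u: "u1 \<bullet> u1 = 1" "u2 \<bullet> u2 = 1" "u1 \<bullet> u2 = 0"
    and PS: "0 \<le> PS1" "0 \<le> PS2" and ab: "0 \<le> \<alpha>" "\<alpha> \<le> \<beta>" "\<beta> \<le> pi / 2"
    and g1: "g1 = norm g1 *\<^sub>R (cos \<alpha> *\<^sub>R u1 + sin \<alpha> *\<^sub>R u2)"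
    and g2: "g2 = norm g2 *\<^sub>R (cos \<beta> *\<^sub>R u1 + sin \<beta> *\<^sub>R u2)"
    and \<theta>s_max: "\<forall>\<theta>\<in>{\<alpha>..\<beta>}. \<phi> \<theta> \<le> \<phi> \<theta>s"
  shows "(v \<bullet> g1)\<^sup>2 * PS1 + (v \<bullet> g2)\<^sup>2 * PS2 \<le> \<phi> \<theta>s * (v \<bullet> v)"
proof -
  have P: "0 \<le> P1" "0 \<le> P2" using PS by (simp_all add: P1_def P2_def)
  obtain \<rho> t where \<rho>: "\<rho>\<^sup>2 \<le> v \<bullet> v" and v: "\<And>\<theta>. v \<bullet> (cos \<theta> *\<^sub>R u1 + sin \<theta> *\<^sub>R u2) = \<rho> * cos (t - \<theta>)"
    using orthonormal_polar[OF u] by blast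
  have "\<phi> t \<le> \<phi> \<theta>s"
    using cos_sq_combination_max_between_is_global[OF P ab] \<theta>s_max unfolding \<phi>_def by blast
  have "v \<bullet> g1 = norm g1 * (\<rho> * cos (t - \<alpha>))" "v \<bullet> g2 = norm g2 * (\<rho> * cos (t - \<beta>))"
    by (subst g1, simp add: v) (subst g2, simp add: v)
  then have "(v \<bullet> g1)\<^sup>2 * PS1 + (v \<bullet> g2)\<^sup>2 * PS2 = \<rho>\<^sup>2 * \<phi> t"
    by (simp add: \<phi>_def P1_def P2_def power_mult_distrib algebra_simps)
  also have "\<dots> \<le> \<phi> \<theta>s * (v \<bullet> v)"
    using \<open>\<phi> t \<le> \<phi> \<theta>s\<close> \<rho> P by (simp add: \<phi>_def mult_mono' mult.commute)
  finally show ?thesis .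
qed

section \<open>Capacities and rate regions\<close>

lemma Ccap_mono: "0 \<le> x \<Longrightarrow> x \<le> y \<Longrightarrow> Ccap x \<le> Ccap y"
  unfolding Ccap_def by simp

lemma Ccap_nonneg: "0 \<le> x \<Longrightarrow> 0 \<le> Ccap x"
  unfolding Ccap_def by simp

lemma Ccap_add_le: "0 \<le> x \<Longrightarrow> 0 \<le> y \<Longrightarrow> Ccap (x + y) \<le> Ccap x + Ccap y"
proof -
  assume "0 \<le> x" "0 \<le> y"
  then have "log 2 (1 + (x + y)) \<le> log 2 ((1 + x) * (1 + y))"
    by (subst log_le_cancel_iff) (auto simp: algebra_simps add_pos_nonneg)
  also have "\<dots> = log 2 (1 + x) + log 2 (1 + y)"
    using \<open>0 \<le> x\<close> \<open>0 \<le> y\<close> by (simp add: log_mult_pos)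
  finally show ?thesis unfolding Ccap_def by simp
qed

lemma Ccap_double_le: "0 \<le> x \<Longrightarrow> Ccap (2 * x) \<le> Ccap x + 1 / 2"
proof -
  assume "0 \<le> x"
  then have "log 2 (1 + 2 * x) \<le> log 2 (2 * (1 + x))" by simp
  also have "\<dots> = log 2 2 + log 2 (1 + x)" using \<open>0 \<le> x\<close> by (intro log_mult_pos) auto
  finally show ?thesis unfolding Ccap_def by simp
qed

definition beam :: "real^'n \<Rightarrow> real^'n \<Rightarrow> real^'n" where
  "beam h1 b = (\<chi> k. h1$k * b$k)"

lemma bil_eq_inner_beam: "bil h1 b g = beam h1 b \<bullet> g"
  unfolding bil_def beam_def inner_vec_def by simp

lemma Wn_eq_inner_beam: "Wn h1 b = beam h1 b \<bullet> beam h1 b"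
  unfolding Wn_def beam_def inner_vec_def by (simp add: power2_eq_square algebra_simps)

lemma Wn_nonneg: "0 \<le> Wn h1 b"
  unfolding Wn_eq_inner_beam by simp

definition snr :: "real \<Rightarrow> real^'n \<Rightarrow> real^'n \<Rightarrow> real^'n \<Rightarrow> real" where
  "snr P g h1 b = (bil h1 b g)\<^sup>2 * P / (Wn h1 b + 1)"

lemma snr_nonneg: "0 \<le> P \<Longrightarrow> 0 \<le> snr P g h1 b"
  unfolding snr_def using Wn_nonneg[of h1 b] by simp

lemma quadA_eq: "quadA PS1 PS2 h01 h02 h1 b = (bil h1 b h01)\<^sup>2 * PS1 + (bil h1 b h02)\<^sup>2 * PS2"
  unfolding quadA_def bil_def power2_eq_square
  by (simp add: sum_distrib_left sum_distrib_right sum.distrib algebra_simps)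

lemma mem_rateRegion_iff:
  "(R1, R2) \<in> rateRegion PS1 PS2 h01 h02 h1 b \<longleftrightarrow>
     0 \<le> R1 \<and> 0 \<le> R2 \<and> R1 \<le> Ccap (snr PS1 h01 h1 b) \<and> R2 \<le> Ccap (snr PS2 h02 h1 b) \<and>
     R1 + R2 \<le> Ccap (snr PS1 h01 h1 b + snr PS2 h02 h1 b)"
  unfolding rateRegion_def snr_def quadA_eq by (simp add: add_divide_distrib)

lemma rateRegion_le:
  assumes "r \<in> rateRegion PS1 PS2 h01 h02 h1 b"
  shows "fst r \<le> Ccap (snr PS1 h01 h1 b)" "snd r \<le> Ccap (snr PS2 h02 h1 b)"
    "fst r + snd r \<le> Ccap (snr PS1 h01 h1 b + snr PS2 h02 h1 b)"
  using assms by (cases r; simp add: mem_rateRegion_iff)+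

lemma rateRegion_corners:
  fixes PS1 PS2 :: real and b h01 h02 h1 :: "real^'n"
  defines "s1 \<equiv> snr PS1 h01 h1 b" and "s2 \<equiv> snr PS2 h02 h1 b"
  assumes "0 \<le> PS1" "0 \<le> PS2"
  shows "(Ccap s1, 0) \<in> rateRegion PS1 PS2 h01 h02 h1 b"
    "(0, Ccap s2) \<in> rateRegion PS1 PS2 h01 h02 h1 b"
    "(Ccap s1, Ccap (s1 + s2) - Ccap s1) \<in> rateRegion PS1 PS2 h01 h02 h1 b"
proof -
  have "0 \<le> s1" "0 \<le> s2" unfolding s1_def s2_def using assms by (simp_all add: snr_nonneg)
  then show "(Ccap s1, 0) \<in> rateRegion PS1 PS2 h01 h02 h1 b"
    "(0, Ccap s2) \<in> rateRegion PS1 PS2 h01 h02 h1 b"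
    "(Ccap s1, Ccap (s1 + s2) - Ccap s1) \<in> rateRegion PS1 PS2 h01 h02 h1 b"
    unfolding mem_rateRegion_iff s1_def[symmetric] s2_def[symmetric]
    using Ccap_add_le[of s1 s2] Ccap_mono[of s1 "s1 + s2"] Ccap_mono[of s2 "s1 + s2"] Ccap_nonneg
    by auto
qed

lemma bounded_rateRegion: "bounded (rateRegion PS1 PS2 h01 h02 h1 b)"
proof (rule bounded_subset)
  show "rateRegion PS1 PS2 h01 h02 h1 b
      \<subseteq> {0..Ccap (snr PS1 h01 h1 b)} \<times> {0..Ccap (snr PS2 h02 h1 b)}"
    by (auto simp: mem_rateRegion_iff)
qed (intro bounded_Times bounded_closed_interval)

lemma betaUp_nonneg: "0 \<le> PS1 \<Longrightarrow> 0 \<le> PS2 \<Longrightarrow> 0 \<le> PUp$k \<Longrightarrow> 0 \<le> betaUp PS1 PS2 h01 h02 PUp k"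
  unfolding betaUp_def by simp

lemma feasible_zero:
  "0 \<le> PS1 \<Longrightarrow> 0 \<le> PS2 \<Longrightarrow> \<forall>k. 0 \<le> PUp$k \<Longrightarrow> feasible PS1 PS2 h01 h02 PUp 0"
  unfolding feasible_def by (simp add: betaUp_nonneg)

lemma Ropt_le_if_linear:
  fixes f :: "real \<times> real \<Rightarrow> real"
  assumes "linear f"
    and "\<And>b r. feasible PS1 PS2 h01 h02 PUp b \<Longrightarrow> r \<in> rateRegion PS1 PS2 h01 h02 h1 b \<Longrightarrow> f r \<le> C"
    and "r \<in> Ropt PS1 PS2 h01 h02 h1 PUp"
  shows "f r \<le> C"
proof -
  have "closed (f -` {..C})"
    using assms(1) by (intro closed_vimage closed_atMost linear_continuous_on)
      (simp add: linear_conv_bounded_linear)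
  moreover have "convex (f -` {..C})"
    using assms(1) by (intro convex_linear_vimage) (simp_all add: convex_real_interval)
  ultimately have "Ropt PS1 PS2 h01 h02 h1 PUp \<subseteq> f -` {..C}"
    unfolding Ropt_def using assms(2) by (intro closure_minimal hull_minimal) auto
  then show ?thesis using assms(3) by blast
qed

lemma zero_mem_Ropt:
  assumes "0 \<le> PS1" "0 \<le> PS2" "\<forall>k. 0 \<le> PUp$k"
  shows "(0, 0) \<in> Ropt PS1 PS2 h01 h02 h1 PUp"
proof -
  have "(0, 0) \<in> rateRegion PS1 PS2 h01 h02 h1 0"
    using assms by (simp add: mem_rateRegion_iff Ccap_nonneg snr_nonneg)
  then have "(0, 0) \<in> (\<Union>b\<in>{b. feasible PS1 PS2 h01 h02 PUp b}. rateRegion PS1 PS2 h01 h02 h1 b)"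
    using feasible_zero[OF assms] by blast
  then show ?thesis
    unfolding Ropt_def by (meson closure_subset hull_subset subsetD)
qed

lemma Sup_Ropt_le_Sup_add_half:
  fixes f :: "real \<times> real \<Rightarrow> real" and \<sigma> :: "real^'n \<Rightarrow> real"
  assumes f: "linear f" and PS: "0 \<le> PS1" "0 \<le> PS2" and PUp: "\<forall>k. 0 \<le> PUp$k"
    and region_le: "\<And>b r. r \<in> rateRegion PS1 PS2 h01 h02 h1 b \<Longrightarrow> f r \<le> Ccap (\<sigma> b)"
    and \<sigma>_nonneg: "\<And>b. 0 \<le> \<sigma> b"
    and feasible_le: "\<And>b. feasible PS1 PS2 h01 h02 PUp b \<Longrightarrow> \<sigma> b \<le> K"
    and Q: "bounded Q" "p \<in> Q" and p: "f p = Ccap (\<sigma> b0)" and K: "K \<le> 2 * \<sigma> b0"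
  shows "Sup (f ` Ropt PS1 PS2 h01 h02 h1 PUp) - 1 / 2 \<le> Sup (f ` Q)"
proof -
  have "bounded (f ` Q)"
    using Q(1) f by (intro bounded_linear_image) (simp_all add: linear_conv_bounded_linear)
  have "0 \<le> K" using \<sigma>_nonneg feasible_le[OF feasible_zero[OF PS PUp]] by (rule order_trans)
  have "f r \<le> Ccap K" if "r \<in> Ropt PS1 PS2 h01 h02 h1 PUp" for r
    using f _ that
  proof (rule Ropt_le_if_linear)
    fix b r assume "feasible PS1 PS2 h01 h02 PUp b" "r \<in> rateRegion PS1 PS2 h01 h02 h1 b"
    then have "f r \<le> Ccap (\<sigma> b)" "Ccap (\<sigma> b) \<le> Ccap K"
      by (simp_all add: region_le feasible_le Ccap_mono \<sigma>_nonneg)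
    then show "f r \<le> Ccap K" by linarith
  qed
  then have "Sup (f ` Ropt PS1 PS2 h01 h02 h1 PUp) \<le> Ccap K"
    using zero_mem_Ropt[OF PS PUp, of h01 h02 h1] by (intro cSup_least) blast+
  also have "\<dots> \<le> Ccap (\<sigma> b0) + 1 / 2"
    using Ccap_mono[OF \<open>0 \<le> K\<close> K] Ccap_double_le[OF \<sigma>_nonneg, of b0] by linarith
  also have "\<dots> \<le> Sup (f ` Q) + 1 / 2"
    unfolding p[symmetric] using Q(2) \<open>bounded (f ` Q)\<close>
    by (simp add: cSup_upper bounded_imp_bdd_above)
  finally show ?thesis by linarith
qed

lemma Sup_Ropt_rates_le_Sup_add_half:
  fixes PS1 PS2 K_fst K_snd K_sum :: real and h01 h02 h1 PUp b_fst b_snd b_sum :: "real^'n"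
    and Q :: "(real \<times> real) set"
  defines "R \<equiv> rateRegion PS1 PS2 h01 h02 h1" and "RO \<equiv> Ropt PS1 PS2 h01 h02 h1 PUp"
  assumes PS: "0 \<le> PS1" "0 \<le> PS2" and PUp: "\<forall>k. 0 \<le> PUp$k" and Q: "bounded Q"
    and K_fst: "\<And>b. feasible PS1 PS2 h01 h02 PUp b \<Longrightarrow> snr PS1 h01 h1 b \<le> K_fst"
      "R b_fst \<subseteq> Q" "K_fst \<le> 2 * snr PS1 h01 h1 b_fst"
    and K_snd: "\<And>b. feasible PS1 PS2 h01 h02 PUp b \<Longrightarrow> snr PS2 h02 h1 b \<le> K_snd"
      "R b_snd \<subseteq> Q" "K_snd \<le> 2 * snr PS2 h02 h1 b_snd"
    and K_sum: "\<And>b. feasible PS1 PS2 h01 h02 PUp b \<Longrightarrow> snr PS1 h01 h1 b + snr PS2 h02 h1 b \<le> K_sum"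
      "R b_sum \<subseteq> Q" "K_sum \<le> 2 * (snr PS1 h01 h1 b_sum + snr PS2 h02 h1 b_sum)"
  shows "Sup (fst ` RO) - 1 / 2 \<le> Sup (fst ` Q)"
    and "Sup (snd ` RO) - 1 / 2 \<le> Sup (snd ` Q)"
    and "Sup ((\<lambda>r. fst r + snd r) ` RO) - 1 / 2 \<le> Sup ((\<lambda>r. fst r + snd r) ` Q)"
proof -
  show "Sup (fst ` RO) - 1 / 2 \<le> Sup (fst ` Q)"
    using subsetD[OF K_fst(2)[unfolded R_def] rateRegion_corners(1)[OF PS]] unfolding RO_def
    by (intro Sup_Ropt_le_Sup_add_half[where \<sigma> = "snr PS1 h01 h1",
          OF linear_fst PS PUp _ _ K_fst(1) Q _ _ K_fst(3)]) (auto simp: rateRegion_le snr_nonneg PS)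
  show "Sup (snd ` RO) - 1 / 2 \<le> Sup (snd ` Q)"
    using subsetD[OF K_snd(2)[unfolded R_def] rateRegion_corners(2)[OF PS]] unfolding RO_def
    by (intro Sup_Ropt_le_Sup_add_half[where \<sigma> = "snr PS2 h02 h1",
          OF linear_snd PS PUp _ _ K_snd(1) Q _ _ K_snd(3)]) (auto simp: rateRegion_le snr_nonneg PS)
  show "Sup ((\<lambda>r. fst r + snd r) ` RO) - 1 / 2 \<le> Sup ((\<lambda>r. fst r + snd r) ` Q)"
    using subsetD[OF K_sum(2)[unfolded R_def] rateRegion_corners(3)[OF PS]] unfolding RO_def
    by (intro Sup_Ropt_le_Sup_add_half[where \<sigma> = "\<lambda>b. snr PS1 h01 h1 b + snr PS2 h02 h1 b",
          OF module_hom_add[OF linear_fst linear_snd] PS PUp _ _ K_sum(1) Q _ _ K_sum(3)])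
      (auto simp: rateRegion_le snr_nonneg PS)
qed

section \<open>Received powers of the relay beamformers\<close>

lemma beam_Bth:
  assumes "\<forall>k. 0 < h1$k"
  obtains c
  where "beam h1 (Bth PS1 PS2 h01 h02 h1 PUp u1 u2 \<theta>) = c *\<^sub>R (cos \<theta> *\<^sub>R u1 + sin \<theta> *\<^sub>R u2)"
proof
  define x where "x = xth u1 u2 \<theta>"
  show "beam h1 (Bth PS1 PS2 h01 h02 h1 PUp u1 u2 \<theta>) =
      Min {betaUp PS1 PS2 h01 h02 PUp k * h1$k / \<bar>x$k\<bar> | k. x$k \<noteq> 0}
        *\<^sub>R (cos \<theta> *\<^sub>R u1 + sin \<theta> *\<^sub>R u2)"
    using assms unfolding Bth_def Let_def beam_def x_def xth_def
    by (simp add: vec_eq_iff) (metis less_irrefl)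
qed

lemma bil_sq_le: "(bil h1 b g)\<^sup>2 \<le> Wn h1 b * (norm g)\<^sup>2"
  unfolding bil_eq_inner_beam Wn_eq_inner_beam power2_norm_eq_inner by (rule Cauchy_Schwarz_ineq)

lemma bil_Bth_sq:
  fixes PS1 PS2 a \<theta> :: real and h01 h02 h1 PUp u1 u2 g :: "real^'n"
  assumes h1: "\<forall>k. 0 < h1$k" and u: "u1 \<bullet> u1 = 1" "u2 \<bullet> u2 = 1" "u1 \<bullet> u2 = 0"
    and g: "g = norm g *\<^sub>R (cos a *\<^sub>R u1 + sin a *\<^sub>R u2)"
  defines "b \<equiv> Bth PS1 PS2 h01 h02 h1 PUp u1 u2 \<theta>"
  shows "(bil h1 b g)\<^sup>2 = Wn h1 b * ((norm g)\<^sup>2 * (cos (\<theta> - a))\<^sup>2)"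
proof -
  obtain c where c: "beam h1 b = c *\<^sub>R (cos \<theta> *\<^sub>R u1 + sin \<theta> *\<^sub>R u2)"
    using beam_Bth[OF h1] unfolding b_def by blast
  have "bil h1 b g = c * norm g * cos (\<theta> - a)"
    unfolding bil_eq_inner_beam c by (subst g) (simp add: cos_sin_combination_inner[OF u])
  moreover have "Wn h1 b = c\<^sup>2"
    unfolding Wn_eq_inner_beam c by (simp add: cos_sin_combination_inner[OF u] power2_eq_square)
  ultimately show ?thesis by (simp add: power_mult_distrib)
qed

lemma abs_bil_le_B2:
  assumes "feasible PS1 PS2 h01 h02 PUp b" "\<forall>k. 0 < h1$k" "\<forall>k. 0 < g$k"
  shows "\<bar>bil h1 b g\<bar> \<le> bil h1 (B2 PS1 PS2 h01 h02 PUp) g"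
proof -
  have "\<bar>bil h1 b g\<bar> \<le> (\<Sum>k\<in>UNIV. \<bar>h1$k * b$k * g$k\<bar>)"
    unfolding bil_def by (rule sum_abs)
  also have "\<dots> \<le> bil h1 (B2 PS1 PS2 h01 h02 PUp) g"
    unfolding bil_def B2_def
  proof (rule sum_mono)
    fix k
    have "\<bar>b$k\<bar> \<le> betaUp PS1 PS2 h01 h02 PUp k" using assms(1) unfolding feasible_def by blast
    then show "\<bar>h1$k * b$k * g$k\<bar> \<le> h1$k * (\<chi> k. betaUp PS1 PS2 h01 h02 PUp k)$k * g$k"
      using assms(2,3) by (simp add: abs_mult mult_left_mono mult_right_mono less_imp_le)
  qed
  finally show ?thesis .
qed

section \<open>The two noise regimes\<close>

lemma divide_plus_one_le:
  fixes G K W :: real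
  assumes "0 \<le> W" "0 \<le> K" "G \<le> K * W"
  shows "G / (W + 1) \<le> K"
  using assms by (simp add: divide_le_eq algebra_simps)

lemma le_two_divide_plus_one:
  fixes K W :: real
  assumes "0 \<le> K" "1 \<le> W"
  shows "K \<le> 2 * (K * W / (W + 1))"
  using assms mult_left_mono[of 1 W K] by (simp add: le_divide_eq algebra_simps)

lemma Sup_Ropt_rates_le_Bth_hull_add_half:
  fixes PS1 PS2 \<alpha> \<beta> \<theta>s :: real and h01 h02 h1 PUp u1 u2 :: "real^'n"
  defines "P1 \<equiv> (norm h01)\<^sup>2 * PS1" and "P2 \<equiv> (norm h02)\<^sup>2 * PS2"
  defines "\<phi> \<equiv> \<lambda>\<theta>. P1 * (cos (\<theta> - \<alpha>))\<^sup>2 + P2 * (cos (\<theta> - \<beta>))\<^sup>2"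
  defines "B \<equiv> Bth PS1 PS2 h01 h02 h1 PUp u1 u2" and "R \<equiv> rateRegion PS1 PS2 h01 h02 h1"
  defines "Q \<equiv> closure (convex hull (R (B \<theta>s) \<union> R (B \<alpha>) \<union> R (B \<beta>)))"
    and "RO \<equiv> Ropt PS1 PS2 h01 h02 h1 PUp"
  assumes PS: "0 \<le> PS1" "0 \<le> PS2" and h1: "\<forall>k. 0 < h1$k" and PUp: "\<forall>k. 0 \<le> PUp$k"
    and u: "u1 \<bullet> u1 = 1" "u2 \<bullet> u2 = 1" "u1 \<bullet> u2 = 0"
    and ab: "0 \<le> \<alpha>" "\<alpha> \<le> \<beta>" "\<beta> \<le> pi / 2"
    and h01: "h01 = norm h01 *\<^sub>R (cos \<alpha> *\<^sub>R u1 + sin \<alpha> *\<^sub>R u2)"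
    and h02: "h02 = norm h02 *\<^sub>R (cos \<beta> *\<^sub>R u1 + sin \<beta> *\<^sub>R u2)"
    and \<theta>s_max: "\<forall>\<theta>\<in>{\<alpha>..\<beta>}. \<phi> \<theta> \<le> \<phi> \<theta>s"
    and W: "1 \<le> Wn h1 (B \<theta>s)" "1 \<le> Wn h1 (B \<alpha>)" "1 \<le> Wn h1 (B \<beta>)"
  shows "Sup (fst ` RO) - 1 / 2 \<le> Sup (fst ` Q)"
    and "Sup (snd ` RO) - 1 / 2 \<le> Sup (snd ` Q)"
    and "Sup ((\<lambda>r. fst r + snd r) ` RO) - 1 / 2 \<le> Sup ((\<lambda>r. fst r + snd r) ` Q)"
proof -
  have P: "0 \<le> P1" "0 \<le> P2" using PS by (simp_all add: P1_def P2_def)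
  have gain_sum_le: "(bil h1 b h01)\<^sup>2 * PS1 + (bil h1 b h02)\<^sup>2 * PS2 \<le> \<phi> \<theta>s * Wn h1 b" for b
    using rank_two_quadratic_form_le[OF u PS ab h01 h02 \<theta>s_max[unfolded \<phi>_def P1_def P2_def]]
    unfolding bil_eq_inner_beam Wn_eq_inner_beam \<phi>_def P1_def P2_def .
  have gain_Bth1: "(bil h1 (B \<theta>) h01)\<^sup>2 * PS1 = P1 * (cos (\<theta> - \<alpha>))\<^sup>2 * Wn h1 (B \<theta>)" for \<theta>
    unfolding B_def bil_Bth_sq[OF h1 u h01] by (simp add: P1_def algebra_simps)
  have gain_Bth2: "(bil h1 (B \<theta>) h02)\<^sup>2 * PS2 = P2 * (cos (\<theta> - \<beta>))\<^sup>2 * Wn h1 (B \<theta>)" for \<theta>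
    unfolding B_def bil_Bth_sq[OF h1 u h02] by (simp add: P2_def algebra_simps)
  have "bounded Q"
    unfolding Q_def by (simp add: R_def bounded_closure bounded_convex_hull bounded_rateRegion)
  have sub: "rateRegion PS1 PS2 h01 h02 h1 (B \<theta>) \<subseteq> Q" if "\<theta> \<in> {\<theta>s, \<alpha>, \<beta>}" for \<theta>
    unfolding Q_def R_def using that closure_subset hull_subset by fastforce
  have snr_fst: "snr PS1 h01 h1 b \<le> P1" for b
    unfolding snr_def using mult_right_mono[OF bil_sq_le PS(1)] P(1) Wn_nonneg
    by (intro divide_plus_one_le) (simp_all add: P1_def algebra_simps)
  have snr_snd: "snr PS2 h02 h1 b \<le> P2" for b
    unfolding snr_def using mult_right_mono[OF bil_sq_le PS(2)] P(2) Wn_nonneg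
    by (intro divide_plus_one_le) (simp_all add: P2_def algebra_simps)
  have snr_sum: "snr PS1 h01 h1 b + snr PS2 h02 h1 b \<le> \<phi> \<theta>s" for b
    unfolding snr_def add_divide_distrib[symmetric] using gain_sum_le P Wn_nonneg
    by (intro divide_plus_one_le) (simp_all add: \<phi>_def)
  have half_fst: "P1 \<le> 2 * snr PS1 h01 h1 (B \<alpha>)"
    unfolding snr_def gain_Bth1 using le_two_divide_plus_one[OF P(1) W(2)] by (simp add: mult.commute)
  have half_snd: "P2 \<le> 2 * snr PS2 h02 h1 (B \<beta>)"
    unfolding snr_def gain_Bth2 using le_two_divide_plus_one[OF P(2) W(3)] by (simp add: mult.commute)
  have half_sum: "\<phi> \<theta>s \<le> 2 * (snr PS1 h01 h1 (B \<theta>s) + snr PS2 h02 h1 (B \<theta>s))"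
    unfolding snr_def add_divide_distrib[symmetric] gain_Bth1 gain_Bth2
    using le_two_divide_plus_one[OF _ W(1), of "\<phi> \<theta>s"] P by (simp add: \<phi>_def distrib_right)
  show "Sup (fst ` RO) - 1 / 2 \<le> Sup (fst ` Q)"
    and "Sup (snd ` RO) - 1 / 2 \<le> Sup (snd ` Q)"
    and "Sup ((\<lambda>r. fst r + snd r) ` RO) - 1 / 2 \<le> Sup ((\<lambda>r. fst r + snd r) ` Q)"
    unfolding RO_def using sub
    by (intro Sup_Ropt_rates_le_Sup_add_half[OF PS PUp \<open>bounded Q\<close>
          snr_fst _ half_fst snr_snd _ half_snd snr_sum _ half_sum]; simp)+
qed

lemma Sup_Ropt_rates_le_B2_add_half:
  fixes PS1 PS2 :: real and h01 h02 h1 PUp :: "real^'n"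
  defines "b2 \<equiv> B2 PS1 PS2 h01 h02 PUp"
  defines "Q \<equiv> rateRegion PS1 PS2 h01 h02 h1 b2" and "RO \<equiv> Ropt PS1 PS2 h01 h02 h1 PUp"
  assumes PS: "0 \<le> PS1" "0 \<le> PS2" and PUp: "\<forall>k. 0 \<le> PUp$k"
    and h: "\<forall>k. 0 < h01$k" "\<forall>k. 0 < h02$k" "\<forall>k. 0 < h1$k"
    and W: "Wn h1 b2 \<le> 1"
  shows "Sup (fst ` RO) - 1 / 2 \<le> Sup (fst ` Q)"
    and "Sup (snd ` RO) - 1 / 2 \<le> Sup (snd ` Q)"
    and "Sup ((\<lambda>r. fst r + snd r) ` RO) - 1 / 2 \<le> Sup ((\<lambda>r. fst r + snd r) ` Q)"
proof -
  have gain_le: "(bil h1 b g)\<^sup>2 * P \<le> (bil h1 b2 g)\<^sup>2 * P"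
    if "feasible PS1 PS2 h01 h02 PUp b" "\<forall>k. 0 < g$k" "0 \<le> P" for b g and P :: real
  proof -
    have "\<bar>bil h1 b g\<bar> \<le> \<bar>bil h1 b2 g\<bar>"
      using abs_bil_le_B2[OF that(1) h(3) that(2)] unfolding b2_def by linarith
    then show ?thesis using that(3) by (simp add: abs_le_square_iff mult_right_mono)
  qed
  have snr_le: "G / (Wn h1 b + 1) \<le> K" if "G \<le> K" "0 \<le> G" for G K b
  proof -
    have "G / (Wn h1 b + 1) \<le> G / 1"
      using that(2) Wn_nonneg[of h1 b] by (intro divide_left_mono) auto
    then show ?thesis using that(1) by simp
  qed
  have half_le_snr: "K \<le> 2 * (K / (Wn h1 b2 + 1))" if "0 \<le> K" for K
    using that W Wn_nonneg[of h1 b2] mult_left_mono[of "Wn h1 b2 + 1" 2 K]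
    by (simp add: le_divide_eq algebra_simps)
  have snr_fst: "snr PS1 h01 h1 b \<le> (bil h1 b2 h01)\<^sup>2 * PS1"
    if "feasible PS1 PS2 h01 h02 PUp b" for b
    unfolding snr_def using gain_le[OF that h(1) PS(1)] PS by (intro snr_le) simp_all
  have snr_snd: "snr PS2 h02 h1 b \<le> (bil h1 b2 h02)\<^sup>2 * PS2"
    if "feasible PS1 PS2 h01 h02 PUp b" for b
    unfolding snr_def using gain_le[OF that h(2) PS(2)] PS by (intro snr_le) simp_all
  have snr_sum:
    "snr PS1 h01 h1 b + snr PS2 h02 h1 b \<le> (bil h1 b2 h01)\<^sup>2 * PS1 + (bil h1 b2 h02)\<^sup>2 * PS2"
    if "feasible PS1 PS2 h01 h02 PUp b" for b
    unfolding snr_def add_divide_distrib[symmetric]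
    using gain_le[OF that h(1) PS(1)] gain_le[OF that h(2) PS(2)] PS by (intro snr_le) simp_all
  have half_fst: "(bil h1 b2 h01)\<^sup>2 * PS1 \<le> 2 * snr PS1 h01 h1 b2"
    unfolding snr_def using half_le_snr PS by simp
  have half_snd: "(bil h1 b2 h02)\<^sup>2 * PS2 \<le> 2 * snr PS2 h02 h1 b2"
    unfolding snr_def using half_le_snr PS by simp
  have half_sum: "(bil h1 b2 h01)\<^sup>2 * PS1 + (bil h1 b2 h02)\<^sup>2 * PS2
      \<le> 2 * (snr PS1 h01 h1 b2 + snr PS2 h02 h1 b2)"
    unfolding snr_def add_divide_distrib[symmetric] using PS by (intro half_le_snr) simp
  show "Sup (fst ` RO) - 1 / 2 \<le> Sup (fst ` Q)"
    and "Sup (snd ` RO) - 1 / 2 \<le> Sup (snd ` Q)"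
    and "Sup ((\<lambda>r. fst r + snd r) ` RO) - 1 / 2 \<le> Sup ((\<lambda>r. fst r + snd r) ` Q)"
    unfolding RO_def Q_def
    by (rule Sup_Ropt_rates_le_Sup_add_half[OF PS PUp bounded_rateRegion snr_fst order_refl half_fst
          snr_snd order_refl half_snd snr_sum order_refl half_sum]; assumption)+
qed

theorem theorem6:
  fixes PS1 PS2 :: real
    and h01 h02 h1 PUp u1 u2 :: "real^'n"
    and \<alpha> \<beta> \<theta>s :: real
  defines "P1 \<equiv> (norm h01)^2 * PS1"
      and "P2 \<equiv> (norm h02)^2 * PS2"
  defines "\<phi> \<equiv> (\<lambda>\<theta>. P1 * (cos (\<theta> - \<alpha>))^2 + P2 * (cos (\<theta> - \<beta>))^2)"
  defines "b10 \<equiv> Bth PS1 PS2 h01 h02 h1 PUp u1 u2 \<theta>s"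
      and "b11 \<equiv> Bth PS1 PS2 h01 h02 h1 PUp u1 u2 \<alpha>"
      and "b12 \<equiv> Bth PS1 PS2 h01 h02 h1 PUp u1 u2 \<beta>"
      and "b2 \<equiv> B2 PS1 PS2 h01 h02 PUp"
  defines "R \<equiv> rateRegion PS1 PS2 h01 h02 h1"
      and "RO \<equiv> Ropt PS1 PS2 h01 h02 h1 PUp"
  assumes PS_pos: "PS1 > 0" "PS2 > 0"
      and h_pos: "\<forall>k. h01$k > 0" "\<forall>k. h02$k > 0" "\<forall>k. h1$k > 0"
      and PUp_pos: "\<forall>k. PUp$k > 0"
      and u_on: "norm u1 = 1" "norm u2 = 1" "inner u1 u2 = 0"
      and ab: "0 \<le> \<alpha>" "\<alpha> \<le> \<beta>" "\<beta> \<le> pi/2"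
      and h01_dir: "h01 /\<^sub>R norm h01 = cos \<alpha> *\<^sub>R u1 + sin \<alpha> *\<^sub>R u2"
      and h02_dir: "h02 /\<^sub>R norm h02 = cos \<beta> *\<^sub>R u1 + sin \<beta> *\<^sub>R u2"
      and \<theta>s_max: "\<alpha> \<le> \<theta>s" "\<theta>s \<le> \<beta>" "\<forall>\<theta>\<in>{\<alpha>..\<beta>}. \<phi> \<theta> \<le> \<phi> \<theta>s"
  shows
    "(Wn h1 b2 \<ge> Wn h1 b10 \<and> Wn h1 b2 \<ge> Wn h1 b11 \<and> Wn h1 b2 \<ge> Wn h1 b12 \<and>
      Wn h1 b10 \<ge> 1 \<and> Wn h1 b11 \<ge> 1 \<and> Wn h1 b12 \<ge> 1 \<longrightarrow>
      (let Q = closure (convex hull (R b10 \<union> R b11 \<union> R b12)) in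
         Sup (fst ` Q) \<ge> Sup (fst ` RO) - 1/2 \<and>
         Sup (snd ` Q) \<ge> Sup (snd ` RO) - 1/2 \<and>
         Sup ((\<lambda>r. fst r + snd r) ` Q) \<ge> Sup ((\<lambda>r. fst r + snd r) ` RO) - 1/2))
   \<and>
    (1 \<ge> Wn h1 b2 \<and> Wn h1 b2 \<ge> Wn h1 b10 \<and> Wn h1 b2 \<ge> Wn h1 b11 \<and> Wn h1 b2 \<ge> Wn h1 b12 \<longrightarrow>
      (let Q = R b2 in
         Sup (fst ` Q) \<ge> Sup (fst ` RO) - 1/2 \<and>
         Sup (snd ` Q) \<ge> Sup (snd ` RO) - 1/2 \<and>
         Sup ((\<lambda>r. fst r + snd r) ` Q) \<ge> Sup ((\<lambda>r. fst r + snd r) ` RO) - 1/2))"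
proof -
  have PS: "0 \<le> PS1" "0 \<le> PS2" and PUp: "\<forall>k. 0 \<le> PUp$k"
    using PS_pos PUp_pos by (auto intro: less_imp_le)
  have u: "u1 \<bullet> u1 = 1" "u2 \<bullet> u2 = 1" "u1 \<bullet> u2 = 0"
    using u_on by (simp_all add: norm_eq_1)
  have scale_normalized: "h = norm h *\<^sub>R (h /\<^sub>R norm h)" if "\<forall>k. 0 < h$k" for h :: "real^'n"
  proof -
    have "h \<noteq> 0" using that by (metis less_irrefl vec_eq_iff zero_index)
    then show ?thesis by simp
  qed
  have h01: "h01 = norm h01 *\<^sub>R (cos \<alpha> *\<^sub>R u1 + sin \<alpha> *\<^sub>R u2)"
    using scale_normalized[OF h_pos(1)] h01_dir by simp
  have h02: "h02 = norm h02 *\<^sub>R (cos \<beta> *\<^sub>R u1 + sin \<beta> *\<^sub>R u2)"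
    using scale_normalized[OF h_pos(2)] h02_dir by simp
  show ?thesis
    unfolding Let_def R_def RO_def b10_def b11_def b12_def b2_def
    using Sup_Ropt_rates_le_Bth_hull_add_half[OF PS h_pos(3) PUp u ab h01 h02
        \<theta>s_max(3)[unfolded \<phi>_def P1_def P2_def]]
      Sup_Ropt_rates_le_B2_add_half[OF PS PUp h_pos]
    by auto
qed

end
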